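(* Let $(\Delta,\mathcal H)$ be a generic cut with associated simplicial complexes $K_\Delta,K_+$ on $\widetilde{[m]}=[m]\cup\{o\}$. For $\sigma\subset\widetilde{[m]}$ let $F_\sigma=\bigcap_{i\in\sigma}H_i$, and let $Z=\{\sigma\subset\widetilde{[m]}: F_\sigma\neq\varnothing\text{ and }F_\sigma\subset\Delta_+\setminus H_o\}$. Then $$K_+\setminus\overline Z=O_{K_+}(o),\qquad K_\Delta\setminus\overline Z=\{\sigma\subset\widetilde{[m]}:F_\sigma\ne\varnothing\text{ and }F_\sigma\subset\Delta_-\setminus H_o\}.$$
   Context: Let $\Delta\subset\mathbb R^n$ be an $n$-dimensional simple polytope $\Delta=\{x:\langle x,\lambda_i\rangle+\eta_i\ge0,\ i=1,\dots,m\}$ whose facets $H_i=\Delta\cap\{\langle x,\lambda_i\rangle+\eta_i=0\}$ are all nonempty. A generic cut is a hyperplane $\mathcal H=\{\langle x,\lambda_0\rangle+\xi=0\}$ in general position with the hyperplanes $\{\langle x,\lambda_i\rangle+\eta_i=0\}$ and with $H_o:=\mathcal H\cap\Delta\neq\varnothing$ (so $H_o$ is the facet indexed by $o$). Set $\Delta_\pm=\Delta\cap\{\pm(\langle x,\lambda_0\rangle+\xi)\ge0\}$, $K_\Delta=\{\sigma\subset[m]:\bigcap_{i\in\sigma}H_i\ne\varnothing\}\cup\{\varnothing\}$, $K_+=\{\sigma\subset\widetilde{[m]}:\bigcap_{i\in\sigma}(H_i\cap\Delta_+)\ne\varnothing\}\cup\{\varnothing\}$. $\overline Z$ is the smallest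 simplicial complex containing $Z$, and $O_{K_+}(o)=\{\sigma\in K_+: o\in\sigma\}$. *)

theory Defs
  imports "HOL-Analysis.Analysis"
begin

text \<open>Facet indices are [m] = {1..m}; the new index o is encoded as 0, so that
the extended index set is {0..m} = [m] \<union> {o}.\<close>

definition hyp :: "'a::euclidean_space \<Rightarrow> real \<Rightarrow> 'a set" where
  "hyp l e = {x. inner x l + e = 0}"

definition polyP :: "(nat \<Rightarrow> 'a::euclidean_space) \<Rightarrow> (nat \<Rightarrow> real) \<Rightarrow> nat \<Rightarrow> 'a set" where
  "polyP lam eta m = {x. \<forall>i\<in>{1..m}. inner x (lam i) + eta i \<ge> 0}"

definition facetH :: "(nat \<Rightarrow> 'a::euclidean_space) \<Rightarrow> (nat \<Rightarrow> real) \<Rightarrow> nat \<Rightarrow> nat \<Rightarrow> 'a set" where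
  "facetH lam eta m i = polyP lam eta m \<inter> hyp (lam i) (eta i)"

definition simple_polytope :: "(nat \<Rightarrow> 'a::euclidean_space) \<Rightarrow> (nat \<Rightarrow> real) \<Rightarrow> nat \<Rightarrow> bool" where
  "simple_polytope lam eta m \<longleftrightarrow>
     polytope (polyP lam eta m) \<and>
     aff_dim (polyP lam eta m) = int DIM('a) \<and>
     (\<forall>i\<in>{1..m}. facetH lam eta m i \<noteq> {}) \<and>
     (\<forall>v. v extreme_point_of (polyP lam eta m) \<longrightarrow>
          card {i\<in>{1..m}. v \<in> facetH lam eta m i} = DIM('a))"

definition general_position_cut ::
  "(nat \<Rightarrow> 'a::euclidean_space) \<Rightarrow> (nat \<Rightarrow> real) \<Rightarrow> nat \<Rightarrow> 'a \<Rightarrow> real \<Rightarrow> bool" where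
  "general_position_cut lam eta m lam0 xi \<longleftrightarrow>
     (\<forall>S \<subseteq> {1..m}.
        (\<Inter>i\<in>S. hyp (lam i) (eta i)) \<inter> hyp lam0 xi \<noteq> {} \<longrightarrow>
        aff_dim ((\<Inter>i\<in>S. hyp (lam i) (eta i)) \<inter> hyp lam0 xi)
          = aff_dim (\<Inter>i\<in>S. hyp (lam i) (eta i)) - 1)"

definition Hcut_o :: "(nat \<Rightarrow> 'a::euclidean_space) \<Rightarrow> (nat \<Rightarrow> real) \<Rightarrow> nat \<Rightarrow> 'a \<Rightarrow> real \<Rightarrow> 'a set" where
  "Hcut_o lam eta m lam0 xi = hyp lam0 xi \<inter> polyP lam eta m"

definition generic_cut :: "(nat \<Rightarrow> 'a::euclidean_space) \<Rightarrow> (nat \<Rightarrow> real) \<Rightarrow> nat \<Rightarrow> 'a \<Rightarrow> real \<Rightarrow> bool" where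
  "generic_cut lam eta m lam0 xi \<longleftrightarrow>
     simple_polytope lam eta m \<and> general_position_cut lam eta m lam0 xi \<and>
     Hcut_o lam eta m lam0 xi \<noteq> {}"

definition Delta_plus :: "(nat \<Rightarrow> 'a::euclidean_space) \<Rightarrow> (nat \<Rightarrow> real) \<Rightarrow> nat \<Rightarrow> 'a \<Rightarrow> real \<Rightarrow> 'a set" where
  "Delta_plus lam eta m lam0 xi = polyP lam eta m \<inter> {x. inner x lam0 + xi \<ge> 0}"

definition Delta_minus :: "(nat \<Rightarrow> 'a::euclidean_space) \<Rightarrow> (nat \<Rightarrow> real) \<Rightarrow> nat \<Rightarrow> 'a \<Rightarrow> real \<Rightarrow> 'a set" where
  "Delta_minus lam eta m lam0 xi = polyP lam eta m \<inter> {x. - (inner x lam0 + xi) \<ge> 0}"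

definition facetX :: "(nat \<Rightarrow> 'a::euclidean_space) \<Rightarrow> (nat \<Rightarrow> real) \<Rightarrow> nat \<Rightarrow> 'a \<Rightarrow> real \<Rightarrow> nat \<Rightarrow> 'a set" where
  "facetX lam eta m lam0 xi i = (if i = 0 then Hcut_o lam eta m lam0 xi else facetH lam eta m i)"

definition faceF :: "(nat \<Rightarrow> 'a::euclidean_space) \<Rightarrow> (nat \<Rightarrow> real) \<Rightarrow> nat \<Rightarrow> 'a \<Rightarrow> real \<Rightarrow> nat set \<Rightarrow> 'a set" where
  "faceF lam eta m lam0 xi \<sigma> = polyP lam eta m \<inter> (\<Inter>i\<in>\<sigma>. facetX lam eta m lam0 xi i)"

definition K_Delta :: "(nat \<Rightarrow> 'a::euclidean_space) \<Rightarrow> (nat \<Rightarrow> real) \<Rightarrow> nat \<Rightarrow> nat set set" where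
  "K_Delta lam eta m = {\<sigma>. \<sigma> \<subseteq> {1..m} \<and> (\<Inter>i\<in>\<sigma>. facetH lam eta m i) \<noteq> {}} \<union> {{}}"

definition K_plus :: "(nat \<Rightarrow> 'a::euclidean_space) \<Rightarrow> (nat \<Rightarrow> real) \<Rightarrow> nat \<Rightarrow> 'a \<Rightarrow> real \<Rightarrow> nat set set" where
  "K_plus lam eta m lam0 xi =
     {\<sigma>. \<sigma> \<subseteq> {0..m} \<and>
        (\<Inter>i\<in>\<sigma>. facetX lam eta m lam0 xi i \<inter> Delta_plus lam eta m lam0 xi) \<noteq> {}} \<union> {{}}"

text \<open>Smallest simplicial complex containing Z: its downward closure.\<close>
definition scx_closure :: "'b set set \<Rightarrow> 'b set set" where
  "scx_closure Z = {\<tau>. \<exists>\<sigma>\<in>Z. \<tau> \<subseteq> \<sigma>}"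

definition star_O :: "'b set set \<Rightarrow> 'b \<Rightarrow> 'b set set" where
  "star_O K v = {\<sigma>\<in>K. v \<in> \<sigma>}"

end

theory Submission
  imports Defs
begin

text \<open>For \<sigma> \<subseteq> [m], the simplex \<sigma> lies in the closure of Z as soon as F_\<sigma> contains a point
on the nonnegative side of the cut. Indeed, the linear functional of the cut attains its maximum
over the face F_\<sigma> at a vertex v of \<Delta>; the facets through v cut out exactly {v}, so by general
position v does not lie on the cutting hyperplane, hence lies strictly on the positive side,
and the vertex face F_\<tau> = {v}, \<tau> \<supseteq> \<sigma>, belongs to Z. Simplices containing o never lie in the
closure of Z because then F_\<sigma> \<subseteq> H_o. Both identities follow by sorting simplices by whether
they contain o and by the sign of the cut functional on F_\<sigma>.\<close>

lemma inner_affine_combination: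
  "inner (v + s *\<^sub>R (w - v)) l + e = (1 - s) * (inner v l + e) + s * (inner w l + e)"
  by (simp add: inner_add_left inner_diff_left algebra_simps)

lemma compact_convex_attains_max_at_extreme_point:
  fixes S :: "'a::euclidean_space set"
  assumes "compact S" "convex S" "S \<noteq> {}"
  obtains v where "v extreme_point_of S" "\<And>y. y \<in> S \<Longrightarrow> inner y l \<le> inner v l"
proof -
  have "continuous_on S (inner l)"
    by (intro continuous_intros)
  then obtain z where z: "z \<in> S" and zmax: "\<And>y. y \<in> S \<Longrightarrow> l \<bullet> y \<le> l \<bullet> z"
    using continuous_attains_sup[OF assms(1,3)] by blast
  define M where "M = S \<inter> {x. l \<bullet> x = l \<bullet> z}"
  have M: "M face_of S"
    unfolding M_def using assms(2) zmax by (rule face_of_Int_supporting_hyperplane_le)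
  then have "compact M" "convex M"
    using assms face_of_imp_compact face_of_imp_convex by blast+
  moreover have "M \<noteq> {}"
    using z by (auto simp: M_def)
  ultimately obtain v where "v extreme_point_of M"
    using extreme_point_exists_convex by blast
  then have "v extreme_point_of S" "v \<in> M"
    using extreme_point_of_face[OF M] by auto
  then show ?thesis
    using that zmax by (auto simp: M_def inner_commute)
qed

lemma subset_atLeastAtMost_1I: "\<sigma> \<subseteq> {0..m} \<Longrightarrow> (0::nat) \<notin> \<sigma> \<Longrightarrow> \<sigma> \<subseteq> {1..m}"
  by (auto simp: subset_eq Suc_le_eq) (metis neq0_conv)

lemma mem_hyp [simp]: "x \<in> hyp l e \<longleftrightarrow> inner x l + e = 0"
  by (simp add: hyp_def)

lemma polyP_nonneg: "x \<in> polyP lam eta m \<Longrightarrow> i \<in> {1..m} \<Longrightarrow> inner x (lam i) + eta i \<ge> 0"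
  by (simp add: polyP_def)

lemma convex_affine_halfspace: "convex {x. inner x l + e \<ge> (0::real)}"
proof -
  have "{x. inner x l + e \<ge> 0} = {x. l \<bullet> x \<ge> - e}"
    by (auto simp: inner_commute)
  then show ?thesis
    by (simp add: convex_halfspace_ge)
qed

lemma convex_polyP: "convex (polyP lam eta m)"
proof -
  have "polyP lam eta m = (\<Inter>i\<in>{1..m}. {x. inner x (lam i) + eta i \<ge> 0})"
    by (auto simp: polyP_def)
  then show ?thesis
    by (simp add: convex_INT convex_affine_halfspace)
qed

lemma faceF_eq_polyP_Int_hyps:
  assumes "\<sigma> \<subseteq> {1..m}"
  shows "faceF lam eta m lam0 xi \<sigma> = polyP lam eta m \<inter> (\<Inter>i\<in>\<sigma>. hyp (lam i) (eta i))"
proof -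
  have "facetX lam eta m lam0 xi i = polyP lam eta m \<inter> hyp (lam i) (eta i)" if "i \<in> \<sigma>" for i
    using that assms by (auto simp: facetX_def facetH_def)
  then show ?thesis
    by (auto simp: faceF_def)
qed

lemma faceF_antimono: "\<sigma> \<subseteq> \<tau> \<Longrightarrow> faceF lam eta m lam0 xi \<tau> \<subseteq> faceF lam eta m lam0 xi \<sigma>"
  by (auto simp: faceF_def)

lemma faceF_subset_Hcut_o: "0 \<in> \<sigma> \<Longrightarrow> faceF lam eta m lam0 xi \<sigma> \<subseteq> Hcut_o lam eta m lam0 xi"
  by (auto simp: faceF_def facetX_def)

lemma faceF_face_of_polyP:
  assumes "\<sigma> \<subseteq> {1..m}"
  shows "faceF lam eta m lam0 xi \<sigma> face_of polyP lam eta m"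
proof (cases "\<sigma> = {}")
  case True
  then show ?thesis
    by (simp add: faceF_def face_of_refl convex_polyP)
next
  case False
  have facet: "polyP lam eta m \<inter> {x. lam i \<bullet> x = - eta i} face_of polyP lam eta m" if "i \<in> \<sigma>" for i
  proof (rule face_of_Int_supporting_hyperplane_ge[OF convex_polyP])
    show "lam i \<bullet> x \<ge> - eta i" if "x \<in> polyP lam eta m" for x
      using polyP_nonneg[OF that, of i] \<open>i \<in> \<sigma>\<close> assms by (auto simp: inner_commute)
  qed
  have "faceF lam eta m lam0 xi \<sigma> = (\<Inter>i\<in>\<sigma>. polyP lam eta m \<inter> {x. lam i \<bullet> x = - eta i})"
    using False by (auto simp: faceF_eq_polyP_Int_hyps[OF assms] inner_commute)
  also have "\<dots> face_of polyP lam eta m"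
    using False facet by (intro face_of_Inter) auto
  finally show ?thesis .
qed

lemma extreme_point_of_polyP_active_hyperplanes:
  assumes v: "v extreme_point_of polyP lam eta m"
  shows "(\<Inter>i\<in>{i\<in>{1..m}. v \<in> hyp (lam i) (eta i)}. hyp (lam i) (eta i)) = {v}"
    (is "?A = _")
proof (rule ccontr)
  define g where "g i x = inner x (lam i) + eta i" for i x
  have "v \<in> ?A"
    by simp
  moreover assume "?A \<noteq> {v}"
  ultimately obtain w where w: "w \<in> ?A" "w \<noteq> v"
    by blast
  define I where "I = {i\<in>{1..m}. g i v \<noteq> 0}"
  have vP: "v \<in> polyP lam eta m"
    using v by (simp add: extreme_point_of_def)
  have pos: "0 < g i v" if "i \<in> I" for i
    using polyP_nonneg[OF vP, of i] that by (simp add: I_def g_def)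
  have lim: "((\<lambda>s. g i (v + s *\<^sub>R (w - v))) \<longlongrightarrow> g i v) (at 0)" for i
    unfolding g_def by (auto intro!: tendsto_eq_intros)
  have "\<forall>\<^sub>F s in at 0. 0 < g i (v + s *\<^sub>R (w - v))" if "i \<in> I" for i
    using lim pos[OF that] by (rule order_tendstoD(1))
  then have "\<forall>\<^sub>F s in at 0. \<forall>i\<in>I. 0 < g i (v + s *\<^sub>R (w - v))"
    by (intro eventually_ball_finite) (simp_all add: I_def)
  then obtain e :: real where "e > 0"
    and e: "\<And>s. s \<noteq> 0 \<Longrightarrow> \<bar>s\<bar> < e \<Longrightarrow> \<forall>i\<in>I. 0 < g i (v + s *\<^sub>R (w - v))"
    unfolding eventually_at dist_real_def by auto
  \<comment> \<open>Along the line through v and w the active constraints stay 0 and the inactive ones stay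
    positive near v, so v is the midpoint of a segment in the polytope.\<close>
  have onP: "v + s *\<^sub>R (w - v) \<in> polyP lam eta m" if "s \<noteq> 0" "\<bar>s\<bar> < e" for s
  proof -
    have "g i (v + s *\<^sub>R (w - v)) \<ge> 0" if "i \<in> {1..m}" for i
    proof (cases "i \<in> I")
      case True
      then show ?thesis
        using e[OF \<open>s \<noteq> 0\<close> \<open>\<bar>s\<bar> < e\<close>] by (simp add: less_imp_le)
    next
      case False
      then have "g i v = 0" "g i w = 0"
        using that w(1) by (simp_all add: I_def g_def)
      then show ?thesis
        by (simp add: g_def inner_affine_combination)
    qed
    then show ?thesis
      by (simp add: polyP_def g_def)
  qed
  define a b where "a = v + (e/2) *\<^sub>R (w - v)" and "b = v + (- e/2) *\<^sub>R (w - v)"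
  have "a \<in> polyP lam eta m" "b \<in> polyP lam eta m"
    unfolding a_def b_def using \<open>e > 0\<close> by (intro onP; simp)+
  moreover have "v \<in> open_segment a b"
  proof -
    have "a - b = e *\<^sub>R (w - v)"
      by (simp add: a_def b_def flip: scaleR_add_left)
    then have "a \<noteq> b"
      using \<open>e > 0\<close> w(2) by auto
    moreover have "midpoint a b = v"
      by (simp add: a_def b_def midpoint_def flip: scaleR_add_left)
    ultimately show ?thesis
      by (metis midpoint_in_open_segment)
  qed
  ultimately show False
    using v by (auto simp: extreme_point_of_def)
qed

lemma extreme_point_of_polyP_notin_cut:
  assumes "general_position_cut lam eta m lam0 xi" "v extreme_point_of polyP lam eta m"
  shows "v \<notin> hyp lam0 xi"
proof
  define \<tau> where "\<tau> = {i\<in>{1..m}. v \<in> hyp (lam i) (eta i)}"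
  have vertex: "(\<Inter>i\<in>\<tau>. hyp (lam i) (eta i)) = {v}"
    unfolding \<tau>_def using assms(2) by (rule extreme_point_of_polyP_active_hyperplanes)
  assume "v \<in> hyp lam0 xi"
  then have "(\<Inter>i\<in>\<tau>. hyp (lam i) (eta i)) \<inter> hyp lam0 xi = {v}"
    using vertex by blast
  moreover have "\<tau> \<subseteq> {1..m}"
    by (auto simp: \<tau>_def)
  ultimately have "aff_dim ((\<Inter>i\<in>\<tau>. hyp (lam i) (eta i)) \<inter> hyp lam0 xi) =
      aff_dim (\<Inter>i\<in>\<tau>. hyp (lam i) (eta i)) - 1"
    using assms(1) unfolding general_position_cut_def by auto
  then show False
    using \<open>(\<Inter>i\<in>\<tau>. hyp (lam i) (eta i)) \<inter> hyp lam0 xi = {v}\<close> vertex by simp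
qed

definition positive_faces :: "(nat \<Rightarrow> 'a::euclidean_space) \<Rightarrow> (nat \<Rightarrow> real) \<Rightarrow> nat \<Rightarrow> 'a \<Rightarrow> real \<Rightarrow> nat set set" where
  "positive_faces lam eta m lam0 xi =
     {\<sigma>. \<sigma> \<subseteq> {0..m} \<and> faceF lam eta m lam0 xi \<sigma> \<noteq> {} \<and>
          faceF lam eta m lam0 xi \<sigma> \<subseteq> Delta_plus lam eta m lam0 xi - Hcut_o lam eta m lam0 xi}"

definition negative_faces :: "(nat \<Rightarrow> 'a::euclidean_space) \<Rightarrow> (nat \<Rightarrow> real) \<Rightarrow> nat \<Rightarrow> 'a \<Rightarrow> real \<Rightarrow> nat set set" where
  "negative_faces lam eta m lam0 xi =
     {\<sigma>. \<sigma> \<subseteq> {0..m} \<and> faceF lam eta m lam0 xi \<sigma> \<noteq> {} \<and>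
          faceF lam eta m lam0 xi \<sigma> \<subseteq> Delta_minus lam eta m lam0 xi - Hcut_o lam eta m lam0 xi}"

lemma mem_Delta_plus_diff_Hcut_o:
  "x \<in> Delta_plus lam eta m lam0 xi - Hcut_o lam eta m lam0 xi \<longleftrightarrow>
     x \<in> polyP lam eta m \<and> inner x lam0 + xi > 0"
  by (auto simp: Delta_plus_def Hcut_o_def)

lemma mem_Delta_minus_diff_Hcut_o:
  "x \<in> Delta_minus lam eta m lam0 xi - Hcut_o lam eta m lam0 xi \<longleftrightarrow>
     x \<in> polyP lam eta m \<and> inner x lam0 + xi < 0"
  by (auto simp: Delta_minus_def Hcut_o_def)

lemma nonneg_point_imp_in_closure_positive_faces:
  assumes "compact (polyP lam eta m)" "general_position_cut lam eta m lam0 xi"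
    and \<sigma>: "\<sigma> \<subseteq> {1..m}"
    and x: "x \<in> faceF lam eta m lam0 xi \<sigma>" "inner x lam0 + xi \<ge> 0"
  shows "\<sigma> \<in> scx_closure (positive_faces lam eta m lam0 xi)"
proof -
  let ?F = "faceF lam eta m lam0 xi \<sigma>"
  have face: "?F face_of polyP lam eta m"
    using \<sigma> by (rule faceF_face_of_polyP)
  then have "compact ?F" "convex ?F"
    using assms(1) convex_polyP face_of_imp_compact face_of_imp_convex by blast+
  then obtain v where "v extreme_point_of ?F" and vmax: "\<And>y. y \<in> ?F \<Longrightarrow> inner y lam0 \<le> inner v lam0"
    using compact_convex_attains_max_at_extreme_point x(1) by blast
  then have v: "v extreme_point_of polyP lam eta m" "v \<in> ?F"
    using extreme_point_of_face[OF face] by auto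
  define \<tau> where "\<tau> = {i\<in>{1..m}. v \<in> hyp (lam i) (eta i)}"
  have "\<sigma> \<subseteq> \<tau>"
    using v(2) \<sigma> by (auto simp: \<tau>_def faceF_eq_polyP_Int_hyps)
  moreover have vP: "v \<in> polyP lam eta m"
    using v(2) by (auto simp: faceF_def)
  moreover have "faceF lam eta m lam0 xi \<tau> = {v}"
  proof -
    have "\<tau> \<subseteq> {1..m}"
      by (auto simp: \<tau>_def)
    moreover have "(\<Inter>i\<in>\<tau>. hyp (lam i) (eta i)) = {v}"
      unfolding \<tau>_def using v(1) by (rule extreme_point_of_polyP_active_hyperplanes)
    ultimately show ?thesis
      using vP by (simp add: faceF_eq_polyP_Int_hyps)
  qed
  moreover have "v \<in> Delta_plus lam eta m lam0 xi - Hcut_o lam eta m lam0 xi"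
  proof -
    have "inner v lam0 + xi \<noteq> 0"
      using extreme_point_of_polyP_notin_cut[OF assms(2) v(1)] by simp
    then show ?thesis
      unfolding mem_Delta_plus_diff_Hcut_o using vmax[OF x(1)] x(2) vP by simp
  qed
  ultimately have "\<tau> \<in> positive_faces lam eta m lam0 xi"
    by (auto simp: positive_faces_def \<tau>_def)
  then show ?thesis
    using \<open>\<sigma> \<subseteq> \<tau>\<close> by (auto simp: scx_closure_def)
qed

lemma notin_closure_positive_faces_if_zero_mem:
  assumes "0 \<in> \<sigma>"
  shows "\<sigma> \<notin> scx_closure (positive_faces lam eta m lam0 xi)"
proof
  assume "\<sigma> \<in> scx_closure (positive_faces lam eta m lam0 xi)"
  then obtain \<tau> where "\<tau> \<in> positive_faces lam eta m lam0 xi" "\<sigma> \<subseteq> \<tau>"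
    by (auto simp: scx_closure_def)
  moreover from this have "faceF lam eta m lam0 xi \<tau> \<subseteq> Hcut_o lam eta m lam0 xi"
    using assms by (intro faceF_subset_Hcut_o) blast
  ultimately show False
    by (auto simp: positive_faces_def)
qed

lemma negative_face_notin_closure_positive_faces:
  assumes "\<sigma> \<in> negative_faces lam eta m lam0 xi"
  shows "\<sigma> \<notin> scx_closure (positive_faces lam eta m lam0 xi)"
proof
  assume "\<sigma> \<in> scx_closure (positive_faces lam eta m lam0 xi)"
  then obtain \<tau> where \<tau>: "\<tau> \<in> positive_faces lam eta m lam0 xi" "\<sigma> \<subseteq> \<tau>"
    by (auto simp: scx_closure_def)
  then obtain y where y: "y \<in> faceF lam eta m lam0 xi \<tau>"
    by (auto simp: positive_faces_def)
  then have "y \<in> Delta_plus lam eta m lam0 xi - Hcut_o lam eta m lam0 xi"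
    using \<tau>(1) unfolding positive_faces_def by blast
  moreover have "y \<in> faceF lam eta m lam0 xi \<sigma>"
    using y faceF_antimono[OF \<tau>(2)] by blast
  then have "y \<in> Delta_minus lam eta m lam0 xi - Hcut_o lam eta m lam0 xi"
    using assms unfolding negative_faces_def by blast
  ultimately show False
    unfolding mem_Delta_plus_diff_Hcut_o mem_Delta_minus_diff_Hcut_o by simp
qed

lemma K_plus_imp_nonneg_point:
  assumes "\<sigma> \<in> K_plus lam eta m lam0 xi" "Hcut_o lam eta m lam0 xi \<noteq> {}"
  obtains x where "x \<in> faceF lam eta m lam0 xi \<sigma>" "inner x lam0 + xi \<ge> 0"
proof (cases "\<sigma> = {}")
  case True
  obtain x where "x \<in> Hcut_o lam eta m lam0 xi"
    using assms(2) by blast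
  with True show ?thesis
    using that[of x] by (simp add: faceF_def Hcut_o_def)
next
  case False
  with assms(1) obtain x where
    "x \<in> (\<Inter>i\<in>\<sigma>. facetX lam eta m lam0 xi i \<inter> Delta_plus lam eta m lam0 xi)"
    by (auto simp: K_plus_def)
  with False show ?thesis
    using that by (auto simp: faceF_def Delta_plus_def)
qed

lemma K_Delta_eq:
  assumes "polyP lam eta m \<noteq> {}"
  shows "K_Delta lam eta m = {\<sigma>. \<sigma> \<subseteq> {1..m} \<and> faceF lam eta m lam0 xi \<sigma> \<noteq> {}}"
proof (intro set_eqI iffI)
  fix \<sigma>
  assume "\<sigma> \<in> K_Delta lam eta m"
  then show "\<sigma> \<in> {\<sigma>. \<sigma> \<subseteq> {1..m} \<and> faceF lam eta m lam0 xi \<sigma> \<noteq> {}}"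
    using assms by (cases "\<sigma> = {}") (auto simp: K_Delta_def faceF_eq_polyP_Int_hyps facetH_def)
next
  fix \<sigma>
  assume "\<sigma> \<in> {\<sigma>. \<sigma> \<subseteq> {1..m} \<and> faceF lam eta m lam0 xi \<sigma> \<noteq> {}}"
  then show "\<sigma> \<in> K_Delta lam eta m"
    by (cases "\<sigma> = {}") (auto simp: K_Delta_def faceF_eq_polyP_Int_hyps facetH_def)
qed

lemma K_plus_diff_closure_positive_faces:
  assumes "compact (polyP lam eta m)" "general_position_cut lam eta m lam0 xi"
    and "Hcut_o lam eta m lam0 xi \<noteq> {}"
  shows "K_plus lam eta m lam0 xi - scx_closure (positive_faces lam eta m lam0 xi) =
         star_O (K_plus lam eta m lam0 xi) 0"
proof (intro set_eqI iffI)
  fix \<sigma>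
  assume \<sigma>: "\<sigma> \<in> K_plus lam eta m lam0 xi - scx_closure (positive_faces lam eta m lam0 xi)"
  have "0 \<in> \<sigma>"
  proof (rule ccontr)
    assume "0 \<notin> \<sigma>"
    moreover have "\<sigma> \<subseteq> {0..m}"
      using \<sigma> by (auto simp: K_plus_def)
    ultimately have "\<sigma> \<subseteq> {1..m}"
      by (intro subset_atLeastAtMost_1I)
    moreover obtain x where "x \<in> faceF lam eta m lam0 xi \<sigma>" "inner x lam0 + xi \<ge> 0"
      using \<sigma> assms(3) K_plus_imp_nonneg_point by blast
    ultimately have "\<sigma> \<in> scx_closure (positive_faces lam eta m lam0 xi)"
      by (rule nonneg_point_imp_in_closure_positive_faces[OF assms(1,2)])
    with \<sigma> show False
      by blast
  qed
  with \<sigma> show "\<sigma> \<in> star_O (K_plus lam eta m lam0 xi) 0"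
    by (simp add: star_O_def)
next
  fix \<sigma>
  assume "\<sigma> \<in> star_O (K_plus lam eta m lam0 xi) 0"
  then show "\<sigma> \<in> K_plus lam eta m lam0 xi - scx_closure (positive_faces lam eta m lam0 xi)"
    using notin_closure_positive_faces_if_zero_mem[of \<sigma>] by (simp add: star_O_def)
qed

lemma K_Delta_diff_closure_positive_faces:
  assumes "compact (polyP lam eta m)" "general_position_cut lam eta m lam0 xi"
    and "Hcut_o lam eta m lam0 xi \<noteq> {}"
  shows "K_Delta lam eta m - scx_closure (positive_faces lam eta m lam0 xi) =
         negative_faces lam eta m lam0 xi"
proof -
  have K_Delta: "K_Delta lam eta m = {\<sigma>. \<sigma> \<subseteq> {1..m} \<and> faceF lam eta m lam0 xi \<sigma> \<noteq> {}}"
    using assms(3) by (intro K_Delta_eq) (auto simp: Hcut_o_def)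
  show ?thesis
  proof (intro set_eqI iffI)
    fix \<sigma>
    assume \<sigma>: "\<sigma> \<in> K_Delta lam eta m - scx_closure (positive_faces lam eta m lam0 xi)"
    then have \<sigma>1: "\<sigma> \<subseteq> {1..m}" and "faceF lam eta m lam0 xi \<sigma> \<noteq> {}"
      by (auto simp: K_Delta)
    moreover have "faceF lam eta m lam0 xi \<sigma> \<subseteq> Delta_minus lam eta m lam0 xi - Hcut_o lam eta m lam0 xi"
    proof
      fix x
      assume x: "x \<in> faceF lam eta m lam0 xi \<sigma>"
      then have "\<not> inner x lam0 + xi \<ge> 0"
        using nonneg_point_imp_in_closure_positive_faces[OF assms(1,2) \<sigma>1] \<sigma> by blast
      moreover have "x \<in> polyP lam eta m"
        using x by (simp add: faceF_def)
      ultimately show "x \<in> Delta_minus lam eta m lam0 xi - Hcut_o lam eta m lam0 xi"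
        unfolding mem_Delta_minus_diff_Hcut_o by simp
    qed
    ultimately show "\<sigma> \<in> negative_faces lam eta m lam0 xi"
      by (auto simp: negative_faces_def)
  next
    fix \<sigma>
    assume \<sigma>: "\<sigma> \<in> negative_faces lam eta m lam0 xi"
    then have "0 \<notin> \<sigma>"
      using faceF_subset_Hcut_o by (fastforce simp: negative_faces_def)
    with \<sigma> have "\<sigma> \<subseteq> {1..m}"
      by (intro subset_atLeastAtMost_1I) (simp_all add: negative_faces_def)
    with \<sigma> have "\<sigma> \<in> K_Delta lam eta m"
      by (simp add: K_Delta negative_faces_def)
    with \<sigma> show "\<sigma> \<in> K_Delta lam eta m - scx_closure (positive_faces lam eta m lam0 xi)"
      using negative_face_notin_closure_positive_faces by blast
  qed
qed

theorem lemma3p11: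
  fixes lam :: "nat \<Rightarrow> 'a::euclidean_space" and eta :: "nat \<Rightarrow> real"
    and m :: nat and lam0 :: 'a and xi :: real
  assumes "generic_cut lam eta m lam0 xi"
  defines "Z \<equiv> {\<sigma>. \<sigma> \<subseteq> {0..m} \<and> faceF lam eta m lam0 xi \<sigma> \<noteq> {} \<and>
                 faceF lam eta m lam0 xi \<sigma> \<subseteq> Delta_plus lam eta m lam0 xi - Hcut_o lam eta m lam0 xi}"
  shows "K_plus lam eta m lam0 xi - scx_closure Z = star_O (K_plus lam eta m lam0 xi) 0 \<and>
         K_Delta lam eta m - scx_closure Z =
           {\<sigma>. \<sigma> \<subseteq> {0..m} \<and> faceF lam eta m lam0 xi \<sigma> \<noteq> {} \<and>
                faceF lam eta m lam0 xi \<sigma> \<subseteq> Delta_minus lam eta m lam0 xi - Hcut_o lam eta m lam0 xi}"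
proof -
  have "compact (polyP lam eta m)" "general_position_cut lam eta m lam0 xi"
    "Hcut_o lam eta m lam0 xi \<noteq> {}"
    using assms(1) polytope_imp_compact by (auto simp: generic_cut_def simple_polytope_def)
  moreover have "Z = positive_faces lam eta m lam0 xi"
    by (simp add: Z_def positive_faces_def)
  ultimately show ?thesis
    using K_plus_diff_closure_positive_faces K_Delta_diff_closure_positive_faces
    unfolding negative_faces_def by blast
qed

end
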